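(* For every $\varepsilon\in(0,3]$, the Truncated Harmonic rule $f^{TH}_\varepsilon$ has metric distortion at most $3+\varepsilon$, and its utilitarian distortion is $O(\sqrt m\,H_m/\varepsilon)$, i.e., there is an absolute constant $C$ such that for all $n,m$ and all $\varepsilon\in(0,3]$ its utilitarian distortion on instances with $m$ alternatives is at most $C\sqrt m\,H_m/\varepsilon$.
   Context: Setting: $n$ agents $\mathcal N$, $m$ alternatives $\mathcal A$; agent $i$ has a strict ranking, $r_i(Y)$ is the rank of $Y$ (1 = top), $X\succ_iY$ iff $r_i(X)<r_i(Y)$; $\mathrm{plu}(X,\vec\sigma)$ is the number of agents ranking $X$ first; $H_m=\sum_{k=1}^m1/k$. Metric framework: pseudometric $d$ on $\mathcal N\cup\mathcal A$, consistent with $\vec\sigma$ if $X\succ_iY\Rightarrow d(i,X)\le d(i,Y)$; $\mathrm{SC}(X,d)=\sum_id(i,X)$; metric distortion of a randomized rule $f$ is $\sup_{\vec\sigma}\sup_{d}\mathbb E_{X\sim f(\vec\sigma)}[\mathrm{SC}(X,d)]/\min_X\mathrm{SC}(X,d)$. Utilitarian framework: $u_i:\mathcal A\to\mathbb R_{\ge0}$, $\sum_Xu_i(X)=1$, consistent if $X\succ_iY\Rightarrow u_i(X)\ge u_i(Y)$; $\mathrm{SW}(X,\vec u)=\sum_iu_i(X)$; utilitarian distortion of $f$ is $\sup_{\vec\sigma}\sup_{\vec u}\max_X\mathrm{SW}(X,\vec u)/\mathbb E_{X\sim f(\vec\sigma)}[\mathrm{SW}(X,\vec u)]$. Plurality Veto: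 initialize $\mathrm{score}(X)=\mathrm{plu}(X,\vec\sigma)$; let $S$ be the alternatives with positive score; process agents in a fixed order, each decrementing the score of her lowest-ranked alternative in $S$, removing it from $S$ when its score hits $0$; output the last alternative removed. (It is known to have metric distortion $3$.) Truncated Harmonic rule $f^{TH}_\varepsilon$: let $\hat X$ be the output of Plurality Veto on $\vec\sigma$; pick an agent $i$ uniformly at random; output $Y$ with probability $p(i,Y)=\frac{\varepsilon}{6H_m r_i(Y)}$ if $Y\succ_i\hat X$, $p(i,\hat X)=1-\sum_{Y\succ_i\hat X}p(i,Y)$, and $p(i,Y)=0$ if $\hat X\succ_iY$. *)

theory Defs
  imports "HOL-Analysis.Harmonic_Numbers"
begin

(* Agents are 0..n-1, alternatives are 0..m-1.
   A profile is r :: nat => nat => nat, r i X = rank of X for agent i (1 = top). *)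

definition is_profile :: "nat \<Rightarrow> nat \<Rightarrow> (nat \<Rightarrow> nat \<Rightarrow> nat) \<Rightarrow> bool" where
  "is_profile n m r \<longleftrightarrow> (\<forall>i<n. bij_betw (r i) {..<m} {1..m})"

definition plu :: "(nat \<Rightarrow> nat \<Rightarrow> nat) \<Rightarrow> nat \<Rightarrow> nat \<Rightarrow> nat" where
  "plu r n X = card {i. i < n \<and> r i X = 1}"

definition lowest :: "(nat \<Rightarrow> nat \<Rightarrow> nat) \<Rightarrow> nat \<Rightarrow> nat set \<Rightarrow> nat" where
  "lowest r i S = (THE Y. Y \<in> S \<and> (\<forall>Z\<in>S. r i Z \<le> r i Y))"

(* state: (score, S, last alternative removed so far) *)
definition pv_step :: "(nat \<Rightarrow> nat \<Rightarrow> nat) \<Rightarrow> nat \<Rightarrow> (nat \<Rightarrow> nat) \<times> nat set \<times> nat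
                        \<Rightarrow> (nat \<Rightarrow> nat) \<times> nat set \<times> nat" where
  "pv_step r i st = (case st of (sc, S, lst) \<Rightarrow>
     (let Y = lowest r i S; sc' = sc(Y := sc Y - 1) in
       if sc' Y = 0 then (sc', S - {Y}, Y) else (sc', S, lst)))"

definition plurality_veto :: "(nat \<Rightarrow> nat \<Rightarrow> nat) \<Rightarrow> nat \<Rightarrow> nat \<Rightarrow> nat" where
  "plurality_veto r n m =
     snd (snd (fold (pv_step r) [0..<n] (plu r n, {X. X < m \<and> 0 < plu r n X}, undefined)))"

definition th_p :: "real \<Rightarrow> nat \<Rightarrow> (nat \<Rightarrow> nat \<Rightarrow> nat) \<Rightarrow> nat \<Rightarrow> nat \<Rightarrow> nat \<Rightarrow> real" where
  "th_p \<epsilon> m r Xh i Y =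
     (if r i Y < r i Xh then \<epsilon> / (6 * harm m * real (r i Y))
      else if Y = Xh then
        1 - (\<Sum>Z\<in>{Z. Z < m \<and> r i Z < r i Xh}. \<epsilon> / (6 * harm m * real (r i Z)))
      else 0)"

(* probability that f^TH_eps outputs Y (agent i chosen uniformly at random) *)
definition th_prob :: "real \<Rightarrow> nat \<Rightarrow> nat \<Rightarrow> (nat \<Rightarrow> nat \<Rightarrow> nat) \<Rightarrow> nat \<Rightarrow> real" where
  "th_prob \<epsilon> n m r Y = (\<Sum>i<n. th_p \<epsilon> m r (plurality_veto r n m) i Y) / real n"

(* points: Inl i = agent i, Inr X = alternative X *)
definition pseudometric_on :: "(nat + nat) set \<Rightarrow> ((nat + nat) \<Rightarrow> (nat + nat) \<Rightarrow> real) \<Rightarrow> bool" where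
  "pseudometric_on P d \<longleftrightarrow>
     (\<forall>x\<in>P. d x x = 0) \<and> (\<forall>x\<in>P. \<forall>y\<in>P. 0 \<le> d x y \<and> d x y = d y x) \<and>
     (\<forall>x\<in>P. \<forall>y\<in>P. \<forall>z\<in>P. d x z \<le> d x y + d y z)"

definition points :: "nat \<Rightarrow> nat \<Rightarrow> (nat + nat) set" where
  "points n m = Inl ` {..<n} \<union> Inr ` {..<m}"

definition metric_consistent :: "nat \<Rightarrow> nat \<Rightarrow> (nat \<Rightarrow> nat \<Rightarrow> nat) \<Rightarrow> ((nat + nat) \<Rightarrow> (nat + nat) \<Rightarrow> real) \<Rightarrow> bool" where
  "metric_consistent n m r d \<longleftrightarrow>
     (\<forall>i<n. \<forall>X<m. \<forall>Y<m. r i X < r i Y \<longrightarrow> d (Inl i) (Inr X) \<le> d (Inl i) (Inr Y))"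

definition SC :: "nat \<Rightarrow> ((nat + nat) \<Rightarrow> (nat + nat) \<Rightarrow> real) \<Rightarrow> nat \<Rightarrow> real" where
  "SC n d X = (\<Sum>i<n. d (Inl i) (Inr X))"

definition utilities_consistent :: "nat \<Rightarrow> nat \<Rightarrow> (nat \<Rightarrow> nat \<Rightarrow> nat) \<Rightarrow> (nat \<Rightarrow> nat \<Rightarrow> real) \<Rightarrow> bool" where
  "utilities_consistent n m r u \<longleftrightarrow>
     (\<forall>i<n. (\<forall>X<m. 0 \<le> u i X) \<and> (\<Sum>X<m. u i X) = 1 \<and>
            (\<forall>X<m. \<forall>Y<m. r i X < r i Y \<longrightarrow> u i X \<ge> u i Y))"

definition SW :: "nat \<Rightarrow> (nat \<Rightarrow> nat \<Rightarrow> real) \<Rightarrow> nat \<Rightarrow> real" where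
  "SW n u X = (\<Sum>i<n. u i X)"

end

theory Submission
  imports Defs
begin

text \<open>Plurality Veto elects \<open>X\<^sub>h\<close> with social cost at most \<open>3\<close> times optimal: every agent
  vetoes an alternative she ranks no higher than \<open>X\<^sub>h\<close>, and the vetoes are distributed exactly
  like the top choices. The Truncated Harmonic rule moves at most an \<open>\<epsilon>/6\<close> share of each agent's
  probability from \<open>X\<^sub>h\<close> to alternatives she prefers to \<open>X\<^sub>h\<close>, each of which is costlier than
  \<open>X\<^sub>h\<close> by at most \<open>2 n d(i, X\<^sub>h)\<close>; summing over \<open>i\<close> gives \<open>3 + \<epsilon>\<close>.

  For utilities, \<open>X\<^sub>h\<close> keeps probability at least \<open>1/2\<close>, and since \<open>u i Y \<le> 1 / r i Y\<close> the
  harmonic weights give each \<open>Y\<close> expected welfare proportional to the welfare it gets from agents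
  preferring it to \<open>X\<^sub>h\<close>. Either \<open>X\<^sub>h\<close> already has welfare of order \<open>n / m\<close>, or these
  preferred welfares add up to about \<open>n\<close>, and Cauchy-Schwarz over the \<open>m\<close> alternatives turns
  either case into the bound \<open>O(\<surd>m H\<^sub>m / \<epsilon>)\<close>.\<close>

lemma sum_comp_eq_if_fibre_cards_eq:
  fixes h :: "'b \<Rightarrow> 'c::semiring_1"
  assumes "finite A" "finite B" "f ` A \<subseteq> B" "g ` A \<subseteq> B"
    and "\<And>y. y \<in> B \<Longrightarrow> card {x\<in>A. f x = y} = card {x\<in>A. g x = y}"
  shows "(\<Sum>x\<in>A. h (f x)) = (\<Sum>x\<in>A. h (g x))"
proof -
  have "(\<Sum>x\<in>A. h (f x)) = (\<Sum>y\<in>B. of_nat (card {x\<in>A. f x = y}) * h y)"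
    using sum.group[OF assms(1,2,3), of "\<lambda>x. h (f x)"] by simp
  also have "\<dots> = (\<Sum>y\<in>B. of_nat (card {x\<in>A. g x = y}) * h y)"
    using assms(5) by simp
  also have "\<dots> = (\<Sum>x\<in>A. h (g x))"
    using sum.group[OF assms(1,2,4), of "\<lambda>x. h (g x)"] by simp
  finally show ?thesis .
qed

lemma lowest_in_and_rank_le:
  assumes "finite S" "S \<noteq> {}" "inj_on (r i) S"
  shows "lowest r i S \<in> S" "\<And>Z. Z \<in> S \<Longrightarrow> r i Z \<le> r i (lowest r i S)"
proof -
  have "Max (r i ` S) \<in> r i ` S" using assms(1,2) by (intro Max_in) auto
  then obtain Y where Y: "Y \<in> S" "Max (r i ` S) = r i Y" by (rule imageE)
  have le: "\<forall>Z\<in>S. r i Z \<le> r i Y" unfolding Y(2)[symmetric] using assms(1) by (intro ballI Max_ge) auto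
  have uniq: "Y' = Y" if "Y' \<in> S" "\<forall>Z\<in>S. r i Z \<le> r i Y'" for Y'
  proof -
    have "r i Y' = r i Y" using that Y(1) le by (meson order_antisym)
    then show ?thesis using inj_onD[OF assms(3)] that(1) Y(1) by blast
  qed
  have "lowest r i S = Y"
    unfolding lowest_def by (rule the_equality) (use Y(1) le uniq in blast)+
  then show "lowest r i S \<in> S" "\<And>Z. Z \<in> S \<Longrightarrow> r i Z \<le> r i (lowest r i S)"
    using Y(1) le by auto
qed

lemma Inl_in_points: "i < n \<Longrightarrow> Inl i \<in> points n m"
  and Inr_in_points: "X < m \<Longrightarrow> Inr X \<in> points n m"
  by (auto simp: points_def)

lemma pseudometric_onD:
  assumes "pseudometric_on P d" "x \<in> P" "y \<in> P"
  shows "0 \<le> d x y" "d x y = d y x" "z \<in> P \<Longrightarrow> d x z \<le> d x y + d y z"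
  using assms unfolding pseudometric_on_def by blast+

lemma one_le_harm: "1 \<le> m \<Longrightarrow> (1::real) \<le> harm m"
  using harm_mono[of 1 m] by (simp add: harm_def)

locale election =
  fixes n m :: nat and r :: "nat \<Rightarrow> nat \<Rightarrow> nat"
  assumes profile: "is_profile n m r"
    and agents_nonempty: "1 \<le> n"
    and alternatives_nonempty: "1 \<le> m"
begin

lemma rank_inj: "i < n \<Longrightarrow> inj_on (r i) {..<m}"
  using profile unfolding is_profile_def bij_betw_def by blast

lemma rank_bounds:
  assumes "i < n" "Y < m"
  shows "1 \<le> r i Y \<and> r i Y \<le> m"
proof -
  have "r i ` {..<m} = {1..m}" using profile assms(1) by (simp add: is_profile_def bij_betw_def)
  then show ?thesis using assms(2) by (metis atLeastAtMost_iff imageI lessThan_iff)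
qed

lemma rank_surj:
  assumes "i < n" "1 \<le> k" "k \<le> m"
  shows "\<exists>Y<m. r i Y = k"
proof -
  have "r i ` {..<m} = {1..m}" using profile assms(1) by (simp add: is_profile_def bij_betw_def)
  then show ?thesis using assms(2,3) by (metis atLeastAtMost_iff imageE lessThan_iff)
qed

lemma rank_eq_iff: "i < n \<Longrightarrow> X < m \<Longrightarrow> Y < m \<Longrightarrow> r i X = r i Y \<longleftrightarrow> X = Y"
  using rank_inj by (auto dest: inj_onD)

definition top_choice :: "nat \<Rightarrow> nat" where
  "top_choice i = (SOME Y. Y < m \<and> r i Y = 1)"

lemma top_choice_ranked_first: "i < n \<Longrightarrow> top_choice i < m \<and> r i (top_choice i) = 1"
  unfolding top_choice_def
  by (rule someI_ex) (use rank_surj[of i 1] alternatives_nonempty in auto)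

lemma plu_eq_card_top_choice: "Y < m \<Longrightarrow> plu r n Y = card {i\<in>{..<n}. top_choice i = Y}"
proof -
  assume Y: "Y < m"
  have "r i Y = 1 \<longleftrightarrow> top_choice i = Y" if "i < n" for i
    using top_choice_ranked_first[OF that] rank_eq_iff[OF that _ Y] by metis
  then have "{i. i < n \<and> r i Y = 1} = {i\<in>{..<n}. top_choice i = Y}" by auto
  then show ?thesis by (simp add: plu_def)
qed

lemma sum_plu: "(\<Sum>Y<m. plu r n Y) = n"
proof -
  have "(\<Sum>Y<m. plu r n Y) = (\<Sum>Y<m. card {i\<in>{..<n}. top_choice i = Y})"
    by (rule sum.cong) (simp_all add: plu_eq_card_top_choice)
  also have "\<dots> = card {..<n}"
    using sum.group[of "{..<n}" "{..<m}" top_choice "\<lambda>_. 1::nat"] top_choice_ranked_first by fastforce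
  finally show ?thesis by simp
qed

subsection \<open>Plurality Veto\<close>

definition pv_state :: "nat \<Rightarrow> (nat \<Rightarrow> nat) \<times> nat set \<times> nat" where
  "pv_state k = fold (pv_step r) [0..<k] (plu r n, {X. X < m \<and> 0 < plu r n X}, undefined)"

definition pv_score :: "nat \<Rightarrow> nat \<Rightarrow> nat" where
  "pv_score k = fst (pv_state k)"

definition pv_active :: "nat \<Rightarrow> nat set" where
  "pv_active k = fst (snd (pv_state k))"

definition pv_veto :: "nat \<Rightarrow> nat" where
  "pv_veto i = lowest r i (pv_active i)"

abbreviation pv_winner :: nat where
  "pv_winner \<equiv> plurality_veto r n m"

lemma pv_state_0: "pv_score 0 = plu r n" "pv_active 0 = {X. X < m \<and> 0 < plu r n X}"
  by (simp_all add: pv_score_def pv_active_def pv_state_def)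

lemma pv_state_Suc:
  fixes k :: nat
  defines "sc \<equiv> (pv_score k)(pv_veto k := pv_score k (pv_veto k) - 1)"
  shows "pv_score (Suc k) = sc"
    and "pv_active (Suc k) = (if sc (pv_veto k) = 0 then pv_active k - {pv_veto k} else pv_active k)"
    and "sc (pv_veto k) = 0 \<Longrightarrow> snd (snd (pv_state (Suc k))) = pv_veto k"
  by (cases "pv_state k";
      simp add: pv_state_def pv_score_def pv_active_def pv_veto_def pv_step_def Let_def sc_def)+

lemma plurality_veto_eq_pv_state: "pv_winner = snd (snd (pv_state n))"
  by (simp add: pv_state_def plurality_veto_def)

lemma pv_active_antimono: "i \<le> j \<Longrightarrow> pv_active j \<subseteq> pv_active i"
proof (induction j rule: dec_induct)
  case (step j)
  then show ?case by (auto simp: pv_state_Suc(2) Let_def)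
qed simp

lemma pv_active_subset: "pv_active k \<subseteq> {..<m}"
  using pv_active_antimono[of 0 k] by (auto simp: pv_state_0)

definition pv_invariant :: "nat \<Rightarrow> bool" where
  "pv_invariant k \<longleftrightarrow>
     (\<forall>Y<m. Y \<in> pv_active k \<longleftrightarrow> 0 < pv_score k Y) \<and>
     (\<Sum>Y<m. pv_score k Y) + k = n \<and>
     (\<forall>Y<m. card {i. i < k \<and> pv_veto i = Y} + pv_score k Y = plu r n Y)"

lemma pv_active_nonempty:
  assumes "pv_invariant k" "k < n"
  shows "pv_active k \<noteq> {}"
proof
  assume "pv_active k = {}"
  then have "(\<Sum>Y<m. pv_score k Y) = 0" using assms(1) by (simp add: pv_invariant_def)
  then show False using assms by (simp add: pv_invariant_def)
qed

lemma pv_veto_lowest: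
  assumes "pv_invariant k" "k < n"
  shows "pv_veto k \<in> pv_active k" "\<And>Z. Z \<in> pv_active k \<Longrightarrow> r k Z \<le> r k (pv_veto k)"
proof -
  note sub = pv_active_subset[of k]
  have "finite (pv_active k)" "inj_on (r k) (pv_active k)"
    using finite_subset[OF sub] inj_on_subset[OF rank_inj[OF assms(2)] sub] by auto
  with pv_active_nonempty[OF assms] lowest_in_and_rank_le[of "pv_active k" r k]
  show "pv_veto k \<in> pv_active k" "\<And>Z. Z \<in> pv_active k \<Longrightarrow> r k Z \<le> r k (pv_veto k)"
    unfolding pv_veto_def by auto
qed

lemma sum_pv_score_Suc:
  assumes "pv_veto k < m" "0 < pv_score k (pv_veto k)"
  shows "Suc (\<Sum>Y<m. pv_score (Suc k) Y) = (\<Sum>Y<m. pv_score k Y)"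
proof -
  let ?V = "pv_veto k"
  have "(\<Sum>Y<m. pv_score k Y) = pv_score k ?V + (\<Sum>Y\<in>{..<m}-{?V}. pv_score k Y)"
    using assms(1) by (simp add: sum.remove)
  moreover have "(\<Sum>Y<m. pv_score (Suc k) Y) = pv_score (Suc k) ?V + (\<Sum>Y\<in>{..<m}-{?V}. pv_score k Y)"
    using assms(1) by (simp add: sum.remove pv_state_Suc(1))
  ultimately show ?thesis using assms(2) by (simp add: pv_state_Suc(1))
qed

lemma pv_invariant_Suc:
  assumes inv: "pv_invariant k" and k: "k < n"
  shows "pv_invariant (Suc k)"
proof -
  have act: "\<forall>Y<m. Y \<in> pv_active k \<longleftrightarrow> 0 < pv_score k Y"
    and sum: "(\<Sum>Y<m. pv_score k Y) + k = n"
    and cnt: "\<forall>Y<m. card {i. i < k \<and> pv_veto i = Y} + pv_score k Y = plu r n Y"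
    using inv unfolding pv_invariant_def by blast+
  define V where "V = pv_veto k"
  have V: "V \<in> pv_active k" "V < m"
    using pv_veto_lowest(1)[OF inv k] pv_active_subset by (auto simp: V_def)
  have "0 < pv_score k V" using act V by blast
  have sc: "pv_score (Suc k) = (pv_score k)(V := pv_score k V - 1)"
    using pv_state_Suc(1) by (simp add: V_def)
  have act': "pv_active (Suc k) = (if pv_score k V = 1 then pv_active k - {V} else pv_active k)"
    using pv_state_Suc(2)[of k] \<open>0 < pv_score k V\<close> by (simp add: V_def)
  have "(\<Sum>Y<m. pv_score (Suc k) Y) + Suc k = n"
    using sum_pv_score_Suc[of k] V(2) \<open>0 < pv_score k V\<close> sum by (simp add: V_def)
  moreover have "card {i. i < Suc k \<and> pv_veto i = Y} + pv_score (Suc k) Y = plu r n Y"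
    if "Y < m" for Y
  proof (cases "Y = V")
    case True
    then have "{i. i < Suc k \<and> pv_veto i = Y} = insert k {i. i < k \<and> pv_veto i = Y}"
      by (auto simp: V_def less_Suc_eq)
    moreover have "card {i. i < k \<and> pv_veto i = V} + pv_score k V = plu r n V"
      using cnt V(2) by blast
    moreover have "pv_score (Suc k) V = pv_score k V - 1" by (simp add: sc)
    ultimately show ?thesis using True \<open>0 < pv_score k V\<close> by simp
  next
    case False
    then have "{i. i < Suc k \<and> pv_veto i = Y} = {i. i < k \<and> pv_veto i = Y}"
      by (auto simp: V_def less_Suc_eq)
    then show ?thesis using cnt that False by (simp add: sc)
  qed
  moreover have "Y \<in> pv_active (Suc k) \<longleftrightarrow> 0 < pv_score (Suc k) Y" if "Y < m" for Y
    using act that V(1) by (auto simp: act' sc)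
  ultimately show ?thesis by (simp add: pv_invariant_def)
qed

lemma pv_invariant: "k \<le> n \<Longrightarrow> pv_invariant k"
proof (induction k)
  case 0
  then show ?case by (auto simp: pv_invariant_def pv_state_0 sum_plu)
qed (simp add: pv_invariant_Suc)

text \<open>With one veto left, the remaining score is \<open>1\<close>, so the last veto removes the winner.\<close>

lemma plurality_veto_eq_last_veto: "pv_winner = pv_veto (n - 1)"
proof -
  define k where "k = n - 1"
  have k: "k < n" "Suc k = n" using agents_nonempty by (auto simp: k_def)
  have inv: "pv_invariant k" using pv_invariant k by simp
  have V: "pv_veto k < m" "0 < pv_score k (pv_veto k)"
    using pv_veto_lowest(1)[OF inv k(1)] pv_active_subset inv by (auto simp: pv_invariant_def)
  have "pv_score k (pv_veto k) \<le> (\<Sum>Y<m. pv_score k Y)"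
    using V(1) by (intro member_le_sum) auto
  then have "pv_score k (pv_veto k) = 1" using V(2) inv k by (simp add: pv_invariant_def)
  then show ?thesis
    using pv_state_Suc(3)[of k] k by (simp add: plurality_veto_eq_pv_state k_def)
qed

lemma pv_veto_less: "i < n \<Longrightarrow> pv_veto i < m"
  using pv_veto_lowest(1)[OF pv_invariant[of i]] pv_active_subset by auto

lemma plurality_veto_less: "pv_winner < m"
  using pv_veto_less[of "n - 1"] agents_nonempty by (simp add: plurality_veto_eq_last_veto)

lemma rank_plurality_veto_le_veto:
  assumes i: "i < n"
  shows "r i (pv_winner) \<le> r i (pv_veto i)"
proof -
  have "pv_veto (n - 1) \<in> pv_active (n - 1)"
    using pv_veto_lowest(1)[OF pv_invariant[of "n - 1"]] agents_nonempty by simp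
  moreover have "pv_active (n - 1) \<subseteq> pv_active i" using i by (intro pv_active_antimono) simp
  ultimately have "pv_winner \<in> pv_active i" by (auto simp: plurality_veto_eq_last_veto)
  then show ?thesis using pv_veto_lowest(2)[OF pv_invariant[of i]] i by simp
qed

lemma card_pv_veto_eq_plu:
  assumes "Y < m"
  shows "card {i\<in>{..<n}. pv_veto i = Y} = plu r n Y"
proof -
  have "(\<Sum>Y<m. pv_score n Y) = 0" "\<forall>Y<m. card {i. i < n \<and> pv_veto i = Y} + pv_score n Y = plu r n Y"
    using pv_invariant[of n] unfolding pv_invariant_def by auto
  moreover have "pv_score n Y = 0"
    using calculation(1) assms by (metis finite_lessThan lessThan_iff sum_eq_0_iff)
  ultimately show ?thesis using assms by (simp add: conj_commute)
qed

lemma sum_pv_veto_eq_sum_top_choice: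
  fixes h :: "nat \<Rightarrow> 'a::semiring_1"
  shows "(\<Sum>i<n. h (pv_veto i)) = (\<Sum>i<n. h (top_choice i))"
proof (rule sum_comp_eq_if_fibre_cards_eq[where B = "{..<m}"])
  fix Y assume "Y \<in> {..<m}"
  then show "card {i\<in>{..<n}. pv_veto i = Y} = card {i\<in>{..<n}. top_choice i = Y}"
    using card_pv_veto_eq_plu[of Y] plu_eq_card_top_choice[of Y] by simp
qed (use pv_veto_less top_choice_ranked_first in auto)

lemma sum_inverse_rank_le_harm:
  assumes "i < n" "A \<subseteq> {..<m}"
  shows "(\<Sum>Y\<in>A. 1 / real (r i Y)) \<le> harm m"
proof -
  have inj: "inj_on (r i) A" using rank_inj[OF assms(1)] assms(2) by (rule inj_on_subset)
  have "(\<Sum>Y\<in>A. 1 / real (r i Y)) = (\<Sum>k\<in>r i ` A. 1 / real k)"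
    by (simp add: sum.reindex[OF inj])
  also have "\<dots> \<le> (\<Sum>k\<in>{1..m}. 1 / real k)"
    using rank_bounds[OF assms(1)] assms(2) by (intro sum_mono2) auto
  also have "\<dots> = harm m" by (simp add: harm_def divide_inverse)
  finally show ?thesis .
qed

context
  fixes d :: "nat + nat \<Rightarrow> nat + nat \<Rightarrow> real"
  assumes pseudometric: "pseudometric_on (points n m) d"
    and consistent: "metric_consistent n m r d"
begin

lemma dist_nonneg: "i < n \<Longrightarrow> X < m \<Longrightarrow> 0 \<le> d (Inl i) (Inr X)"
  using pseudometric_onD(1)[OF pseudometric Inl_in_points Inr_in_points] .

lemma dist_agent_triangle:
  "i < n \<Longrightarrow> X < m \<Longrightarrow> Y < m \<Longrightarrow> d (Inr X) (Inr Y) \<le> d (Inl i) (Inr X) + d (Inl i) (Inr Y)"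
  using pseudometric_onD[OF pseudometric Inr_in_points Inl_in_points, of X i] Inr_in_points by auto

lemma dist_alternative_triangle:
  "i < n \<Longrightarrow> X < m \<Longrightarrow> Y < m \<Longrightarrow> d (Inl i) (Inr Y) \<le> d (Inl i) (Inr X) + d (Inr X) (Inr Y)"
  using pseudometric_onD(3)[OF pseudometric Inl_in_points Inr_in_points Inr_in_points] .

lemma dist_mono_rank:
  assumes "i < n" "X < m" "Y < m" "r i X \<le> r i Y"
  shows "d (Inl i) (Inr X) \<le> d (Inl i) (Inr Y)"
  using assms consistent rank_eq_iff[OF assms(1-3)] unfolding metric_consistent_def
  by (cases "r i X = r i Y") auto

theorem plurality_veto_distortion:
  assumes X: "X < m"
  shows "SC n d pv_winner \<le> 3 * SC n d X"
proof -
  have "SC n d pv_winner \<le> (\<Sum>i<n. d (Inl i) (Inr X) + d (Inr X) (Inr (pv_veto i)))"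
    unfolding SC_def
  proof (rule sum_mono)
    fix i assume "i \<in> {..<n}"
    then have i: "i < n" by simp
    have "d (Inl i) (Inr pv_winner) \<le> d (Inl i) (Inr (pv_veto i))"
      using rank_plurality_veto_le_veto i pv_veto_less plurality_veto_less by (intro dist_mono_rank) auto
    also have "\<dots> \<le> d (Inl i) (Inr X) + d (Inr X) (Inr (pv_veto i))"
      using dist_alternative_triangle i X pv_veto_less by blast
    finally show "d (Inl i) (Inr pv_winner) \<le> d (Inl i) (Inr X) + d (Inr X) (Inr (pv_veto i))" .
  qed
  also have "\<dots> = SC n d X + (\<Sum>i<n. d (Inr X) (Inr (top_choice i)))"
    by (simp add: SC_def sum.distrib sum_pv_veto_eq_sum_top_choice[of "\<lambda>Y. d (Inr X) (Inr Y)"])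
  also have "\<dots> \<le> SC n d X + (\<Sum>i<n. 2 * d (Inl i) (Inr X))"
  proof (intro add_left_mono sum_mono)
    fix i assume "i \<in> {..<n}"
    then have i: "i < n" by simp
    have "d (Inl i) (Inr (top_choice i)) \<le> d (Inl i) (Inr X)"
      using top_choice_ranked_first[OF i] rank_bounds[OF i X] i X by (intro dist_mono_rank) auto
    then show "d (Inr X) (Inr (top_choice i)) \<le> 2 * d (Inl i) (Inr X)"
      using dist_agent_triangle[OF i X, of "top_choice i"] top_choice_ranked_first[OF i] by simp
  qed
  also have "\<dots> = 3 * SC n d X" by (simp add: SC_def flip: sum_distrib_left)
  finally show ?thesis .
qed

end

end

subsection \<open>The Truncated Harmonic rule\<close>

locale truncated_harmonic = election +
  fixes \<epsilon> :: real
  assumes eps_pos: "0 < \<epsilon>" and eps_le_3: "\<epsilon> \<le> 3"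
begin

abbreviation p :: "nat \<Rightarrow> nat \<Rightarrow> real" where
  "p \<equiv> th_p \<epsilon> m r pv_winner"

definition harmonic_weight :: "nat \<Rightarrow> nat \<Rightarrow> real" where
  "harmonic_weight i Y = (if r i Y < r i pv_winner then \<epsilon> / (6 * harm m * real (r i Y)) else 0)"

lemma harmonic_weight_nonneg: "0 \<le> harmonic_weight i Y"
  using eps_pos by (simp add: harmonic_weight_def harm_nonneg)

lemma sum_harmonic_weight:
  "(\<Sum>Y<m. harmonic_weight i Y) = (\<Sum>Z\<in>{Z. Z < m \<and> r i Z < r i pv_winner}. \<epsilon> / (6 * harm m * real (r i Z)))"
  unfolding harmonic_weight_def by (simp add: sum.If_cases Collect_conj_eq lessThan_def Int_commute)

lemma sum_harmonic_weight_le: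
  assumes "i < n"
  shows "(\<Sum>Y<m. harmonic_weight i Y) \<le> \<epsilon> / 6"
proof -
  have h: "(0::real) < harm m" using alternatives_nonempty by simp
  have "(\<Sum>Y<m. harmonic_weight i Y)
      = \<epsilon> / (6 * harm m) * (\<Sum>Z\<in>{Z. Z < m \<and> r i Z < r i pv_winner}. 1 / real (r i Z))"
    by (simp add: sum_harmonic_weight sum_distrib_left)
  also have "\<dots> \<le> \<epsilon> / (6 * harm m) * harm m"
    using sum_inverse_rank_le_harm[OF assms, of "{Z. Z < m \<and> r i Z < r i pv_winner}"] eps_pos
    by (intro mult_left_mono) (auto simp: harm_nonneg)
  also have "\<dots> = \<epsilon> / 6" using h by (simp del: harm_pos_iff)
  finally show ?thesis .
qed

lemma th_p_eq:
  "p i Y = harmonic_weight i Y + (if Y = pv_winner then 1 - (\<Sum>Z<m. harmonic_weight i Z) else 0)"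
  unfolding th_p_def sum_harmonic_weight by (simp add: harmonic_weight_def)

lemma sum_th_p: "(\<Sum>Y<m. p i Y) = 1"
  using plurality_veto_less by (simp add: th_p_eq sum.distrib)

lemma th_p_ge_harmonic_weight: "i < n \<Longrightarrow> harmonic_weight i Y \<le> p i Y"
  using sum_harmonic_weight_le[of i] eps_le_3 by (simp add: th_p_eq)

lemma th_p_nonneg: "i < n \<Longrightarrow> 0 \<le> p i Y"
  using th_p_ge_harmonic_weight harmonic_weight_nonneg order_trans by blast

lemma th_p_winner_ge_half: "i < n \<Longrightarrow> 1 / 2 \<le> p i pv_winner"
  using sum_harmonic_weight_le[of i] harmonic_weight_nonneg[of i pv_winner] eps_le_3
  by (simp add: th_p_eq)

lemma th_p_eq_zero: "\<not> r i Y < r i pv_winner \<Longrightarrow> Y \<noteq> pv_winner \<Longrightarrow> p i Y = 0"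
  by (simp add: th_p_def)

lemma expectation_th_prob:
  "(\<Sum>Y<m. th_prob \<epsilon> n m r Y * f Y) = (\<Sum>i<n. \<Sum>Y<m. p i Y * f Y) / real n"
  unfolding th_prob_def
  by (simp add: sum_divide_distrib sum_distrib_right sum.swap[of _ "{..<m}"])

context
  fixes d :: "nat + nat \<Rightarrow> nat + nat \<Rightarrow> real"
  assumes pseudometric: "pseudometric_on (points n m) d"
    and consistent: "metric_consistent n m r d"
begin

lemma SC_le_SC_winner_if_preferred:
  assumes i: "i < n" and Y: "Y < m" and pref: "r i Y < r i pv_winner"
  shows "SC n d Y \<le> SC n d pv_winner + 2 * real n * d (Inl i) (Inr pv_winner)"
proof -
  note W = plurality_veto_less
  have "d (Inl i) (Inr Y) \<le> d (Inl i) (Inr pv_winner)"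
    using pref i Y W by (intro dist_mono_rank[OF pseudometric consistent]) auto
  then have WY: "d (Inr pv_winner) (Inr Y) \<le> 2 * d (Inl i) (Inr pv_winner)"
    using dist_agent_triangle[OF pseudometric consistent i W Y] by simp
  have "SC n d Y \<le> (\<Sum>j<n. d (Inl j) (Inr pv_winner) + d (Inr pv_winner) (Inr Y))"
    unfolding SC_def
    by (rule sum_mono) (use dist_alternative_triangle[OF pseudometric consistent] W Y in auto)
  also have "\<dots> = SC n d pv_winner + real n * d (Inr pv_winner) (Inr Y)"
    by (simp add: SC_def sum.distrib)
  also have "\<dots> \<le> SC n d pv_winner + real n * (2 * d (Inl i) (Inr pv_winner))"
    using WY by (intro add_left_mono mult_left_mono) auto
  finally show ?thesis by simp
qed

lemma expected_SC_agent_le: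
  assumes i: "i < n"
  shows "(\<Sum>Y<m. p i Y * SC n d Y) \<le> SC n d pv_winner + \<epsilon> / 3 * real n * d (Inl i) (Inr pv_winner)"
proof -
  define c where "c = 2 * real n * d (Inl i) (Inr pv_winner)"
  have c: "0 \<le> c"
    using dist_nonneg[OF pseudometric consistent i plurality_veto_less] by (simp add: c_def)
  have "(\<Sum>Y<m. p i Y * SC n d Y) \<le> (\<Sum>Y<m. p i Y * SC n d pv_winner + harmonic_weight i Y * c)"
  proof (rule sum_mono)
    fix Y assume "Y \<in> {..<m}"
    then have Y: "Y < m" by simp
    show "p i Y * SC n d Y \<le> p i Y * SC n d pv_winner + harmonic_weight i Y * c"
    proof (cases "r i Y < r i pv_winner")
      case True
      then have "p i Y = harmonic_weight i Y" by (simp add: th_p_def harmonic_weight_def)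
      moreover have "harmonic_weight i Y * SC n d Y \<le> harmonic_weight i Y * (SC n d pv_winner + c)"
        using SC_le_SC_winner_if_preferred[OF i Y True] harmonic_weight_nonneg
        by (intro mult_left_mono) (auto simp: c_def)
      ultimately show ?thesis by (simp add: algebra_simps)
    next
      case False
      then show ?thesis
        using th_p_eq_zero[OF False] by (cases "Y = pv_winner") (auto simp: harmonic_weight_def)
    qed
  qed
  also have "\<dots> = (\<Sum>Y<m. p i Y) * SC n d pv_winner + c * (\<Sum>Y<m. harmonic_weight i Y)"
    by (simp add: sum.distrib sum_distrib_right sum_distrib_left mult.commute)
  also have "\<dots> = SC n d pv_winner + c * (\<Sum>Y<m. harmonic_weight i Y)"
    by (simp add: sum_th_p)
  also have "\<dots> \<le> SC n d pv_winner + c * (\<epsilon> / 6)"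
    using sum_harmonic_weight_le[OF i] c by (intro add_left_mono mult_left_mono)
  finally show ?thesis by (simp add: c_def)
qed

theorem metric_distortion:
  assumes X: "X < m"
  shows "(\<Sum>Y<m. th_prob \<epsilon> n m r Y * SC n d Y) \<le> (3 + \<epsilon>) * SC n d X"
proof -
  have "(\<Sum>Y<m. th_prob \<epsilon> n m r Y * SC n d Y) = (\<Sum>i<n. \<Sum>Y<m. p i Y * SC n d Y) / real n"
    by (rule expectation_th_prob)
  also have "\<dots> \<le> (\<Sum>i<n. SC n d pv_winner + \<epsilon> / 3 * real n * d (Inl i) (Inr pv_winner)) / real n"
    by (intro divide_right_mono sum_mono expected_SC_agent_le) auto
  also have "\<dots> = real n * ((1 + \<epsilon> / 3) * SC n d pv_winner) / real n"
    by (simp add: sum.distrib SC_def sum_distrib_left algebra_simps)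
  also have "\<dots> = (1 + \<epsilon> / 3) * SC n d pv_winner"
    using agents_nonempty by simp
  also have "\<dots> \<le> (1 + \<epsilon> / 3) * (3 * SC n d X)"
    using plurality_veto_distortion[OF pseudometric consistent X] eps_pos by (intro mult_left_mono) auto
  also have "\<dots> = (3 + \<epsilon>) * SC n d X" by (simp add: algebra_simps)
  finally show ?thesis .
qed

end

subsection \<open>Utilitarian distortion\<close>

context
  fixes u :: "nat \<Rightarrow> nat \<Rightarrow> real"
  assumes consistent: "utilities_consistent n m r u"
begin

lemma utility_nonneg: "i < n \<Longrightarrow> X < m \<Longrightarrow> 0 \<le> u i X"
  and sum_utility: "i < n \<Longrightarrow> (\<Sum>X<m. u i X) = 1"
  using consistent by (simp_all add: utilities_consistent_def)

lemma utility_antimono_rank: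
  assumes "i < n" "X < m" "Y < m" "r i X \<le> r i Y"
  shows "u i Y \<le> u i X"
  using assms consistent rank_eq_iff[OF assms(1-3)] unfolding utilities_consistent_def
  by (cases "r i X = r i Y") auto

text \<open>The \<open>r i Y\<close> alternatives that agent \<open>i\<close> ranks at least as high as \<open>Y\<close> each have utility
  at least \<open>u i Y\<close>, and together at most \<open>1\<close>.\<close>

lemma utility_le_inverse_rank:
  assumes i: "i < n" and Y: "Y < m"
  shows "u i Y \<le> 1 / real (r i Y)"
proof -
  define L where "L = {Z\<in>{..<m}. r i Z \<le> r i Y}"
  have "r i ` L = {1..r i Y}"
  proof
    show "r i ` L \<subseteq> {1..r i Y}" using rank_bounds[OF i] by (auto simp: L_def)
    show "{1..r i Y} \<subseteq> r i ` L"
    proof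
      fix k assume "k \<in> {1..r i Y}"
      then have "1 \<le> k" "k \<le> m" using rank_bounds[OF i Y] by auto
      then obtain Z where "Z < m" "r i Z = k" using rank_surj[OF i] by blast
      then show "k \<in> r i ` L" using \<open>k \<in> {1..r i Y}\<close> by (auto simp: L_def)
    qed
  qed
  moreover have "inj_on (r i) L" using rank_inj[OF i] by (rule inj_on_subset) (auto simp: L_def)
  ultimately have card: "card L = r i Y" by (metis card_atLeastAtMost card_image diff_Suc_1)
  have "real (card L) * u i Y = (\<Sum>Z\<in>L. u i Y)" by simp
  also have "\<dots> \<le> (\<Sum>Z\<in>L. u i Z)"
    using utility_antimono_rank[OF i _ Y] by (intro sum_mono) (auto simp: L_def)
  also have "\<dots> \<le> (\<Sum>Z<m. u i Z)"
    using utility_nonneg[OF i] by (intro sum_mono2) (auto simp: L_def)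
  finally have "real (r i Y) * u i Y \<le> 1" using card sum_utility[OF i] by simp
  moreover have "1 \<le> r i Y" using rank_bounds[OF i Y] by simp
  ultimately show ?thesis by (simp add: field_simps)
qed

lemma SW_nonneg: "X < m \<Longrightarrow> 0 \<le> SW n u X"
  unfolding SW_def by (rule sum_nonneg) (simp add: utility_nonneg)

definition expected_welfare :: real where
  "expected_welfare = (\<Sum>Y<m. th_prob \<epsilon> n m r Y * SW n u Y)"

definition welfare_above_winner :: "nat \<Rightarrow> real" where
  "welfare_above_winner Y = (\<Sum>i<n. if r i Y < r i pv_winner then u i Y else 0)"

lemma welfare_above_winner_nonneg: "Y < m \<Longrightarrow> 0 \<le> welfare_above_winner Y"
  unfolding welfare_above_winner_def by (rule sum_nonneg) (simp add: utility_nonneg)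

lemma welfare_above_winner_le_SW: "Y < m \<Longrightarrow> welfare_above_winner Y \<le> SW n u Y"
  unfolding welfare_above_winner_def SW_def by (rule sum_mono) (simp add: utility_nonneg)

lemma expected_welfare_eq: "expected_welfare * real n = (\<Sum>i<n. \<Sum>Y<m. p i Y * SW n u Y)"
  using agents_nonempty by (simp add: expected_welfare_def expectation_th_prob)

lemma expected_welfare_nonneg: "0 \<le> expected_welfare"
proof -
  have "0 \<le> expected_welfare * real n"
    unfolding expected_welfare_eq
    by (intro sum_nonneg mult_nonneg_nonneg) (simp_all add: th_p_nonneg SW_nonneg)
  then show ?thesis using agents_nonempty by (simp add: zero_le_mult_iff)
qed

lemma SW_winner_le_expected_welfare: "SW n u pv_winner \<le> 2 * expected_welfare"
proof -
  have "real n * (SW n u pv_winner / 2) \<le> (\<Sum>i<n. \<Sum>Y<m. p i Y * SW n u Y)"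
  proof -
    have "SW n u pv_winner / 2 \<le> (\<Sum>Y<m. p i Y * SW n u Y)" if i: "i < n" for i
    proof -
      have "1 / 2 * SW n u pv_winner \<le> p i pv_winner * SW n u pv_winner"
        using th_p_winner_ge_half[OF i] SW_nonneg[OF plurality_veto_less] by (rule mult_right_mono)
      then have "SW n u pv_winner / 2 \<le> p i pv_winner * SW n u pv_winner" by simp
      also have "\<dots> \<le> (\<Sum>Y<m. p i Y * SW n u Y)"
        using plurality_veto_less th_p_nonneg[OF i] SW_nonneg
        by (intro member_le_sum[where f = "\<lambda>Y. p i Y * SW n u Y"]) auto
      finally show ?thesis .
    qed
    then have "(\<Sum>i<n. SW n u pv_winner / 2) \<le> (\<Sum>i<n. \<Sum>Y<m. p i Y * SW n u Y)"
      by (intro sum_mono) simp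
    then show ?thesis by simp
  qed
  then have "real n * SW n u pv_winner \<le> real n * (2 * expected_welfare)"
    using expected_welfare_eq by (simp add: algebra_simps)
  then show ?thesis using agents_nonempty by (simp add: mult_le_cancel_left_pos)
qed

text \<open>Since \<open>u i Y \<le> 1 / r i Y\<close>, the harmonic weight of agent \<open>i\<close> on a preferred \<open>Y\<close> is at least
  \<open>\<epsilon> u i Y / (6 H\<^sub>m)\<close>.\<close>

lemma weighted_welfare_above_winner_le:
  "\<epsilon> * (\<Sum>Y<m. SW n u Y * welfare_above_winner Y) \<le> 6 * harm m * real n * expected_welfare"
proof -
  have h: "(0::real) < harm m" using alternatives_nonempty by simp
  have weight: "\<epsilon> / (6 * harm m) * (if r i Y < r i pv_winner then u i Y else 0) \<le> harmonic_weight i Y"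
    if i: "i < n" and Y: "Y < m" for i Y
  proof -
    have "\<epsilon> / (6 * harm m) * u i Y \<le> \<epsilon> / (6 * harm m) * (1 / real (r i Y))"
      using utility_le_inverse_rank[OF i Y] eps_pos by (intro mult_left_mono) (auto simp: harm_nonneg)
    then show ?thesis by (simp add: harmonic_weight_def)
  qed
  have "\<epsilon> / (6 * harm m) * (\<Sum>Y<m. SW n u Y * welfare_above_winner Y)
      = (\<Sum>Y<m. SW n u Y * (\<Sum>i<n. \<epsilon> / (6 * harm m) * (if r i Y < r i pv_winner then u i Y else 0)))"
    unfolding welfare_above_winner_def sum_distrib_left by (simp add: mult.left_commute)
  also have "\<dots> \<le> (\<Sum>Y<m. SW n u Y * (\<Sum>i<n. harmonic_weight i Y))"
    using weight SW_nonneg by (intro sum_mono mult_left_mono) auto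
  also have "\<dots> = (\<Sum>Y<m. \<Sum>i<n. harmonic_weight i Y * SW n u Y)"
    by (simp add: sum_distrib_left mult.commute)
  also have "\<dots> = (\<Sum>i<n. \<Sum>Y<m. harmonic_weight i Y * SW n u Y)"
    by (rule sum.swap)
  also have "\<dots> \<le> expected_welfare * real n"
    unfolding expected_welfare_eq
    using th_p_ge_harmonic_weight SW_nonneg by (intro sum_mono mult_right_mono) auto
  finally show ?thesis using h by (simp add: field_simps del: harm_pos_iff)
qed

text \<open>Each agent puts utility at most \<open>u i X\<^sub>h\<close> on each alternative she does not prefer to
  \<open>X\<^sub>h\<close>, hence at least \<open>1 - m u i X\<^sub>h\<close> on those she prefers.\<close>

lemma agents_le_sum_welfare_above_winner:
  "real n - real m * SW n u pv_winner \<le> (\<Sum>Y<m. welfare_above_winner Y)"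
proof -
  note W = plurality_veto_less
  have "1 - real m * u i pv_winner \<le> (\<Sum>Y<m. if r i Y < r i pv_winner then u i Y else 0)"
    if i: "i < n" for i
  proof -
    have "(\<Sum>Y<m. if r i Y < r i pv_winner then 0 else u i Y) \<le> (\<Sum>Y<m. u i pv_winner)"
      using utility_antimono_rank[OF i W] utility_nonneg[OF i W] by (intro sum_mono) auto
    moreover have "(\<Sum>Y<m. u i Y) = (\<Sum>Y<m. if r i Y < r i pv_winner then u i Y else 0)
        + (\<Sum>Y<m. if r i Y < r i pv_winner then 0 else u i Y)"
      by (subst sum.distrib[symmetric]) (rule sum.cong, auto)
    ultimately show ?thesis using sum_utility[OF i] by simp
  qed
  then have "(\<Sum>i<n. 1 - real m * u i pv_winner) \<le> (\<Sum>i<n. \<Sum>Y<m. if r i Y < r i pv_winner then u i Y else 0)"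
    by (intro sum_mono) auto
  also have "\<dots> = (\<Sum>Y<m. welfare_above_winner Y)"
    unfolding welfare_above_winner_def by (rule sum.swap)
  finally show ?thesis by (simp add: sum_subtractf SW_def sum_distrib_left)
qed

lemma SW_le_welfare_above_winner_add:
  assumes X: "X < m"
  shows "SW n u X \<le> welfare_above_winner X + SW n u pv_winner"
  unfolding SW_def welfare_above_winner_def sum.distrib[symmetric]
proof (rule sum_mono)
  fix i assume "i \<in> {..<n}"
  then have i: "i < n" by simp
  show "u i X \<le> (if r i X < r i pv_winner then u i X else 0) + u i pv_winner"
  proof (cases "r i X < r i pv_winner")
    case True
    then show ?thesis using utility_nonneg[OF i plurality_veto_less] by simp
  next
    case False
    then show ?thesis using utility_antimono_rank[OF i plurality_veto_less X] by simp
  qed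
qed

text \<open>If \<open>X\<^sub>h\<close> has small welfare, the alternatives preferred to it carry welfare about \<open>n\<close>;
  by Cauchy-Schwarz the harmonic weights then yield expected welfare about \<open>n / (m H\<^sub>m)\<close>.\<close>

lemma agents_le_expected_welfare:
  "\<epsilon> * real n \<le> 24 * harm m * real m * expected_welfare"
proof -
  define E where "E = expected_welfare"
  define T where "T = (\<Sum>Y<m. welfare_above_winner Y)"
  define G where "G = (\<Sum>Y<m. SW n u Y * welfare_above_winner Y)"
  have h: "(1::real) \<le> harm m" using one_le_harm alternatives_nonempty by simp
  have E: "0 \<le> E" using expected_welfare_nonneg by (simp add: E_def)
  have G: "\<epsilon> * G \<le> 6 * harm m * real n * E"
    using weighted_welfare_above_winner_le by (simp add: E_def G_def)
  have "T\<^sup>2 \<le> (\<Sum>Y<m. (welfare_above_winner Y)\<^sup>2) * real m"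
    using sum_squared_le_sum_of_squares[of "welfare_above_winner" "{..<m}"] by (simp add: T_def)
  also have "(\<Sum>Y<m. (welfare_above_winner Y)\<^sup>2) \<le> G"
    unfolding G_def power2_eq_square
    using welfare_above_winner_le_SW welfare_above_winner_nonneg
    by (intro sum_mono mult_right_mono) auto
  finally have CS: "T\<^sup>2 \<le> G * real m" by (simp add: mult_right_mono)
  show ?thesis
  proof (cases "real n \<le> 2 * real m * SW n u pv_winner")
    case True
    have "2 * real m * SW n u pv_winner \<le> 2 * real m * (2 * E)"
      using SW_winner_le_expected_welfare by (intro mult_left_mono) (auto simp: E_def)
    moreover have "\<epsilon> * real n \<le> 3 * real n" using eps_le_3 by (intro mult_right_mono) auto
    ultimately have "\<epsilon> * real n \<le> 12 * real m * E" using True by linarith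
    also have "\<dots> \<le> 24 * harm m * real m * E" using h E by (simp add: mult_right_mono)
    finally show ?thesis by (simp add: E_def)
  next
    case False
    then have "real n / 2 \<le> T"
      using agents_le_sum_welfare_above_winner by (simp add: T_def)
    then have "(real n / 2)\<^sup>2 \<le> T\<^sup>2" by (intro power_mono) auto
    then have "\<epsilon> * (real n * real n) \<le> 4 * real m * (\<epsilon> * G)"
      using CS eps_pos by (simp add: power2_eq_square algebra_simps)
    also have "\<dots> \<le> 4 * real m * (6 * harm m * real n * E)" using G by (intro mult_left_mono) auto
    finally have "real n * (\<epsilon> * real n) \<le> real n * (24 * harm m * real m * E)"
      by (simp add: algebra_simps)
    then show ?thesis using agents_nonempty by (simp add: E_def mult_le_cancel_left_pos)
  qed
qed

text \<open>An alternative whose welfare comes mostly from agents preferring it to \<open>X\<^sub>h\<close> has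
  \<open>\<epsilon> SW(X)\<^sup>2 = O(H\<^sub>m n E)\<close>, and \<open>\<epsilon> n = O(H\<^sub>m m E)\<close> turns this into \<open>\<epsilon> SW(X) = O(H\<^sub>m \<surd>m E)\<close>.\<close>

lemma SW_le_if_welfare_above_winner_large:
  assumes X: "X < m" and large: "SW n u X / 2 < welfare_above_winner X"
  shows "\<epsilon> * SW n u X \<le> 20 * harm m * sqrt (real m) * expected_welfare"
proof -
  define E where "E = expected_welfare"
  define h :: real where "h = harm m"
  have h: "1 \<le> h" using one_le_harm alternatives_nonempty by (simp add: h_def)
  have E: "0 \<le> E" using expected_welfare_nonneg by (simp add: E_def)
  have "SW n u X * welfare_above_winner X \<le> (\<Sum>Y<m. SW n u Y * welfare_above_winner Y)"
    using X SW_nonneg welfare_above_winner_nonneg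
    by (intro member_le_sum[where f = "\<lambda>Y. SW n u Y * welfare_above_winner Y"]) auto
  then have "\<epsilon> * (SW n u X * welfare_above_winner X) \<le> \<epsilon> * (\<Sum>Y<m. SW n u Y * welfare_above_winner Y)"
    by (rule mult_left_mono) (use eps_pos in simp)
  also have "\<dots> \<le> 6 * h * real n * E"
    using weighted_welfare_above_winner_le by (simp add: E_def h_def)
  finally have "\<epsilon> * (SW n u X * welfare_above_winner X) \<le> 6 * h * real n * E" .
  moreover have "SW n u X * (SW n u X / 2) \<le> SW n u X * welfare_above_winner X"
    using less_imp_le[OF large] SW_nonneg[OF X] by (rule mult_left_mono)
  then have "\<epsilon> * (SW n u X * (SW n u X / 2)) \<le> \<epsilon> * (SW n u X * welfare_above_winner X)"
    by (rule mult_left_mono) (use eps_pos in simp)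
  moreover have "\<epsilon> * (SW n u X * SW n u X) = 2 * (\<epsilon> * (SW n u X * (SW n u X / 2)))" by simp
  ultimately have "\<epsilon> * (SW n u X * SW n u X) \<le> 12 * h * real n * E" by linarith
  then have "\<epsilon> * (\<epsilon> * (SW n u X * SW n u X)) \<le> \<epsilon> * (12 * h * real n * E)"
    by (rule mult_left_mono) (use eps_pos in simp)
  then have "(\<epsilon> * SW n u X)\<^sup>2 \<le> 12 * h * E * (\<epsilon> * real n)"
    by (simp add: power2_eq_square algebra_simps)
  also have "\<dots> \<le> 12 * h * E * (24 * h * real m * E)"
    using agents_le_expected_welfare h E by (intro mult_left_mono) (auto simp: E_def h_def)
  also have "\<dots> \<le> (20 * h * sqrt (real m) * E)\<^sup>2"
    using h E by (simp add: power_mult_distrib power2_eq_square)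
  finally have "\<epsilon> * SW n u X \<le> 20 * h * sqrt (real m) * E"
    by (rule power2_le_imp_le) (use h E in simp)
  then show ?thesis by (simp add: E_def h_def)
qed

theorem utilitarian_distortion:
  assumes X: "X < m"
  shows "SW n u X \<le> 20 * sqrt (real m) * harm m / \<epsilon> * (\<Sum>Y<m. th_prob \<epsilon> n m r Y * SW n u Y)"
proof -
  have "\<epsilon> * SW n u X \<le> 20 * harm m * sqrt (real m) * expected_welfare"
  proof (cases "welfare_above_winner X \<le> SW n u X / 2")
    case True
    then have "SW n u X \<le> 4 * expected_welfare"
      using SW_le_welfare_above_winner_add[OF X] SW_winner_le_expected_welfare by simp
    moreover have "\<epsilon> * SW n u X \<le> 3 * SW n u X"
      using eps_le_3 SW_nonneg[OF X] by (rule mult_right_mono)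
    ultimately have "\<epsilon> * SW n u X \<le> 12 * expected_welfare" by linarith
    also have "\<dots> \<le> 20 * (harm m * sqrt (real m)) * expected_welfare"
      using mult_mono[OF one_le_harm[OF alternatives_nonempty], of 1 "sqrt (real m)"]
        one_le_harm[OF alternatives_nonempty] alternatives_nonempty expected_welfare_nonneg
      by (intro mult_right_mono) auto
    finally show ?thesis by (simp add: mult.assoc)
  next
    case False
    then show ?thesis using SW_le_if_welfare_above_winner_large[OF X] by simp
  qed
  then show ?thesis
    using eps_pos by (simp add: expected_welfare_def pos_le_divide_eq mult.commute mult.left_commute)
qed

end

end

theorem mainTheorem7:
  shows "(\<forall>\<epsilon>::real. 0 < \<epsilon> \<and> \<epsilon> \<le> 3 \<longrightarrow>
            (\<forall>n m r d. 1 \<le> n \<and> 1 \<le> m \<and> is_profile n m r \<and>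
                pseudometric_on (points n m) d \<and> metric_consistent n m r d \<longrightarrow>
                (\<forall>X<m. (\<Sum>Y<m. th_prob \<epsilon> n m r Y * SC n d Y) \<le> (3 + \<epsilon>) * SC n d X)))
       \<and> (\<exists>C::real. \<forall>n m r u \<epsilon>::real. 0 < \<epsilon> \<and> \<epsilon> \<le> 3 \<and> 1 \<le> n \<and> 1 \<le> m \<and>
            is_profile n m r \<and> utilities_consistent n m r u \<longrightarrow>
            (\<forall>X<m. SW n u X \<le> C * sqrt (real m) * harm m / \<epsilon> *
                       (\<Sum>Y<m. th_prob \<epsilon> n m r Y * SW n u Y)))"
proof (intro conjI exI[of _ 20] allI impI; elim conjE)
  fix \<epsilon> :: real and n m r d X
  assume "0 < \<epsilon>" "\<epsilon> \<le> 3" "1 \<le> n" "1 \<le> m" "is_profile n m r"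
    and metric: "pseudometric_on (points n m) d" "metric_consistent n m r d" and "X < m"
  then interpret truncated_harmonic n m r \<epsilon> by unfold_locales
  show "(\<Sum>Y<m. th_prob \<epsilon> n m r Y * SC n d Y) \<le> (3 + \<epsilon>) * SC n d X"
    using metric_distortion[OF metric \<open>X < m\<close>] .
next
  fix n m r u X and \<epsilon> :: real
  assume "0 < \<epsilon>" "\<epsilon> \<le> 3" "1 \<le> n" "1 \<le> m" "is_profile n m r"
    and utilities: "utilities_consistent n m r u" and "X < m"
  then interpret truncated_harmonic n m r \<epsilon> by unfold_locales
  show "SW n u X \<le> 20 * sqrt (real m) * harm m / \<epsilon> * (\<Sum>Y<m. th_prob \<epsilon> n m r Y * SW n u Y)"
    using utilitarian_distortion[OF utilities \<open>X < m\<close>] .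
qed

end
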